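(* Let $(X,\mu)$ be a measure space with $\mu$ not identically zero. For $i=1,\dots,n$ let $1<p_i<\infty$ with $\sum_{i=1}^n p_i^{-1}=1$, and let $0\le f_i\in L^{p_i}(\mu)$ with $\|f_i\|_{p_i}>0$. Let $p_{\min}^{-1}=\min\{p_1^{-1},\dots,p_n^{-1}\}$, $p_{\max}^{-1}=\max\{p_1^{-1},\dots,p_n^{-1}\}$, and $$R:=\frac{\int\prod_{i=1}^n f_i^{p_i/n}\,d\mu}{\prod_{i=1}^n\|f_i\|_{p_i}^{p_i/n}}.$$ Then $$\prod_{i=1}^n\|f_i\|_{p_i}\left(1-np^{-1}_{\max}(1-R)\right)\le\Big\|\prod_{i=1}^n f_i\Big\|_1\le\prod_{i=1}^n\|f_i\|_{p_i}\left(1-np^{-1}_{\min}(1-R)\right).$$ *)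

theory Defs
  imports "HOL-Analysis.Analysis"
begin

definition Lp_norm :: "'a measure \<Rightarrow> real \<Rightarrow> ('a \<Rightarrow> real) \<Rightarrow> real" where
  "Lp_norm M p f = (\<integral>x. \<bar>f x\<bar> powr p \<partial>M) powr (1 / p)"

definition in_Lp :: "'a measure \<Rightarrow> real \<Rightarrow> ('a \<Rightarrow> real) \<Rightarrow> bool" where
  "in_Lp M p f \<longleftrightarrow> f \<in> borel_measurable M \<and> integrable M (\<lambda>x. \<bar>f x\<bar> powr p)"

end

theory Submission
  imports Defs
begin

(* Normalise a_i = (f_i / ||f_i||_{p_i})^{p_i}, so that every a_i is a nonnegative integrable
   function with integral 1.  The weighted geometric mean of the a_i with weights w_i = 1/p_i is
   prod f_i / prod ||f_i||, and their equal-weight geometric mean integrates to R.  The core is a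
   pointwise refinement of the weighted AM-GM inequality: for weights w_i summing to 1 on a set of
   k points, with wmin <= w_i <= wmax,
     k wmin (A - G) <= sum w_i a_i - prod a_i^{w_i} <= k wmax (A - G),
   where A and G are the unweighted arithmetic and geometric means.  Integrating it (the weighted
   and unweighted arithmetic means both integrate to 1) gives both bounds on ||prod f_i||_1. *)

(* Weighted AM-GM for positive reals, from the concavity of ln (Jensen). *)
lemma weighted_am_gm_pos:
  fixes w x :: "'b \<Rightarrow> real"
  assumes fin: "finite S" and sw: "sum w S = 1" and w0: "\<And>i. i \<in> S \<Longrightarrow> 0 \<le> w i"
    and xp: "\<And>i. i \<in> S \<Longrightarrow> 0 < x i"
  shows "(\<Prod>i\<in>S. x i powr w i) \<le> (\<Sum>i\<in>S. w i * x i)"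
proof -
  have "S \<noteq> {}" using sw by auto
  have concave: "(\<Sum>i\<in>S. w i * ln (x i)) \<le> ln (\<Sum>i\<in>S. w i *\<^sub>R x i)"
    by (rule concave_on_sum[OF fin \<open>S \<noteq> {}\<close> ln_concave sw]) (use w0 xp in auto)
  have mean_pos: "0 < (\<Sum>i\<in>S. w i * x i)"
  proof -
    obtain j where j: "j \<in> S" "w j \<noteq> 0" using sw by (metis sum.neutral zero_neq_one)
    then have "0 < w j" using w0 by (simp add: order_neq_le_trans)
    then have "0 < w j * x j" using xp[OF j(1)] by simp
    moreover have "\<And>i. i \<in> S \<Longrightarrow> 0 \<le> w i * x i" using w0 xp by (meson less_imp_le mult_nonneg_nonneg)
    ultimately show ?thesis by (rule sum_pos2[OF fin j(1)])
  qed
  have "(\<Prod>i\<in>S. x i powr w i) = (\<Prod>i\<in>S. exp (w i * ln (x i)))"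
    using xp by (intro prod.cong) (auto simp: powr_def less_imp_neq[symmetric])
  also have "\<dots> = exp (\<Sum>i\<in>S. w i * ln (x i))"
    by (rule exp_sum[OF fin, symmetric])
  also have "\<dots> \<le> exp (ln (\<Sum>i\<in>S. w i * x i))" using concave by simp
  also have "\<dots> = (\<Sum>i\<in>S. w i * x i)" using mean_pos by simp
  finally show ?thesis .
qed

lemma weighted_am_gm:
  fixes w x :: "'b \<Rightarrow> real"
  assumes fin: "finite S" and sw: "sum w S = 1" and w0: "\<And>i. i \<in> S \<Longrightarrow> 0 \<le> w i"
    and x0: "\<And>i. i \<in> S \<Longrightarrow> 0 \<le> x i"
  shows "(\<Prod>i\<in>S. x i powr w i) \<le> (\<Sum>i\<in>S. w i * x i)"
proof (cases "\<exists>i\<in>S. x i = 0")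
  case True
  then have "(\<Prod>i\<in>S. x i powr w i) = 0" using fin by auto
  moreover have "0 \<le> (\<Sum>i\<in>S. w i * x i)" using w0 x0 by (simp add: sum_nonneg)
  ultimately show ?thesis by simp
next
  case False
  then have "\<And>i. i \<in> S \<Longrightarrow> 0 < x i" using x0 by (metis order_le_less)
  then show ?thesis using weighted_am_gm_pos[OF fin sw w0] by blast
qed

lemma weighted_am_gm_extra_term:
  fixes v x :: "'b \<Rightarrow> real"
  assumes fin: "finite S" and sw: "l + sum v S = 1" and l0: "0 \<le> l"
    and v0: "\<And>i. i \<in> S \<Longrightarrow> 0 \<le> v i" and y0: "0 \<le> y" and x0: "\<And>i. i \<in> S \<Longrightarrow> 0 \<le> x i"
  shows "y powr l * (\<Prod>i\<in>S. x i powr v i) \<le> l * y + (\<Sum>i\<in>S. v i * x i)"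
proof -
  define W where "W = case_option l v"
  define X where "X = case_option y x"
  define T where "T = insert None (Some ` S)"
  have sum_T: "sum g T = g None + (\<Sum>i\<in>S. g (Some i))" for g :: "'b option \<Rightarrow> real"
    unfolding T_def using fin by (simp add: sum.reindex)
  have prod_T: "prod g T = g None * (\<Prod>i\<in>S. g (Some i))" for g :: "'b option \<Rightarrow> real"
    unfolding T_def using fin by (simp add: prod.reindex)
  have "(\<Prod>z\<in>T. X z powr W z) \<le> (\<Sum>z\<in>T. W z * X z)"
  proof (rule weighted_am_gm)
    show "sum W T = 1" using sw by (simp add: sum_T W_def)
    show "finite T" using fin by (simp add: T_def)
    show "\<And>z. z \<in> T \<Longrightarrow> 0 \<le> W z" using l0 v0 by (auto simp: T_def W_def)
    show "\<And>z. z \<in> T \<Longrightarrow> 0 \<le> X z" using y0 x0 by (auto simp: T_def X_def)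
  qed
  then show ?thesis by (simp add: sum_T prod_T W_def X_def)
qed

(* Lower half of the refined AM-GM inequality: apply AM-GM to the points a_i with weights
   w_i - wmin together with the geometric mean G with weight k * wmin. *)
lemma refined_am_gm_lower:
  fixes w a :: "'b \<Rightarrow> real" and S :: "'b set"
  defines "k \<equiv> real (card S)"
  assumes fin: "finite S" and sw: "sum w S = 1" and a0: "\<And>i. i \<in> S \<Longrightarrow> 0 \<le> a i"
    and wmin: "\<And>i. i \<in> S \<Longrightarrow> wmin \<le> w i" and wmin0: "0 \<le> wmin"
  shows "k * wmin * ((\<Sum>i\<in>S. a i) / k - (\<Prod>i\<in>S. a i powr (1 / k)))
           \<le> (\<Sum>i\<in>S. w i * a i) - (\<Prod>i\<in>S. a i powr w i)"
proof -
  define G where "G = (\<Prod>i\<in>S. a i powr (1 / k))"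
  have k_pos: "0 < k" using fin sw by (auto simp: k_def card_gt_0_iff)
  have G0: "0 \<le> G" unfolding G_def by (simp add: prod_nonneg)
  have "G powr (k * wmin) * (\<Prod>i\<in>S. a i powr (w i - wmin))
          \<le> k * wmin * G + (\<Sum>i\<in>S. (w i - wmin) * a i)"
  proof (rule weighted_am_gm_extra_term[OF fin _ _ _ G0 a0])
    show "k * wmin + sum (\<lambda>i. w i - wmin) S = 1" using sw by (simp add: sum_subtractf k_def)
  qed (use wmin0 k_pos wmin in auto)
  moreover have "G powr (k * wmin) * (\<Prod>i\<in>S. a i powr (w i - wmin)) = (\<Prod>i\<in>S. a i powr w i)"
  proof -
    have "G powr (k * wmin) = (\<Prod>i\<in>S. a i powr wmin)"
      unfolding G_def prod_powr_distrib powr_powr using k_pos by simp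
    then show ?thesis by (simp add: prod.distrib[symmetric] powr_add[symmetric])
  qed
  moreover have "(\<Sum>i\<in>S. (w i - wmin) * a i) = (\<Sum>i\<in>S. w i * a i) - wmin * (\<Sum>i\<in>S. a i)"
    by (simp add: left_diff_distrib sum_subtractf sum_distrib_left)
  ultimately show ?thesis using k_pos unfolding G_def by (simp add: algebra_simps)
qed

(* Upper half: apply AM-GM to the weighted geometric mean P with weight 1/(k wmax) together
   with the points a_i with weights (wmax - w_i)/(k wmax); the result is a bound on G. *)
lemma refined_am_gm_upper:
  fixes w a :: "'b \<Rightarrow> real" and S :: "'b set"
  defines "k \<equiv> real (card S)"
  assumes fin: "finite S" and sw: "sum w S = 1" and a0: "\<And>i. i \<in> S \<Longrightarrow> 0 \<le> a i"
    and wmax: "\<And>i. i \<in> S \<Longrightarrow> w i \<le> wmax"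
  shows "(\<Sum>i\<in>S. w i * a i) - (\<Prod>i\<in>S. a i powr w i)
           \<le> k * wmax * ((\<Sum>i\<in>S. a i) / k - (\<Prod>i\<in>S. a i powr (1 / k)))"
proof -
  define P where "P = (\<Prod>i\<in>S. a i powr w i)"
  define c where "c = k * wmax"
  have k_pos: "0 < k" using fin sw by (auto simp: k_def card_gt_0_iff)
  have "1 \<le> c"
  proof -
    have "sum w S \<le> (\<Sum>i\<in>S. wmax)" using wmax by (rule sum_mono)
    then show ?thesis using sw by (simp add: c_def k_def)
  qed
  have P0: "0 \<le> P" unfolding P_def by (simp add: prod_nonneg)
  have "P powr (1 / c) * (\<Prod>i\<in>S. a i powr ((wmax - w i) / c))
          \<le> 1 / c * P + (\<Sum>i\<in>S. (wmax - w i) / c * a i)"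
  proof (rule weighted_am_gm_extra_term[OF fin _ _ _ P0 a0])
    have "sum (\<lambda>i. (wmax - w i) / c) S = (c - 1) / c"
      using sw by (simp add: sum_subtractf c_def k_def sum_divide_distrib[symmetric])
    then show "1 / c + sum (\<lambda>i. (wmax - w i) / c) S = 1"
      using \<open>1 \<le> c\<close> by (simp add: field_simps)
  qed (use \<open>1 \<le> c\<close> wmax in auto)
  moreover have "P powr (1 / c) * (\<Prod>i\<in>S. a i powr ((wmax - w i) / c)) = (\<Prod>i\<in>S. a i powr (1 / k))"
  proof -
    have "P powr (1 / c) = (\<Prod>i\<in>S. a i powr (w i / c))"
      unfolding P_def prod_powr_distrib powr_powr by simp
    moreover have "wmax \<noteq> 0" using \<open>1 \<le> c\<close> by (auto simp: c_def)
    ultimately show ?thesis using k_pos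
      by (simp add: c_def prod.distrib[symmetric] powr_add[symmetric] add_divide_distrib[symmetric])
  qed
  moreover have "(\<Sum>i\<in>S. (wmax - w i) / c * a i) = (wmax * (\<Sum>i\<in>S. a i) - (\<Sum>i\<in>S. w i * a i)) / c"
    by (simp add: left_diff_distrib sum_subtractf sum_distrib_left sum_divide_distrib[symmetric]
        diff_divide_distrib flip: sum_distrib_left)
  ultimately have "c * (\<Prod>i\<in>S. a i powr (1 / k)) \<le> P + wmax * (\<Sum>i\<in>S. a i) - (\<Sum>i\<in>S. w i * a i)"
    using \<open>1 \<le> c\<close> by (simp add: field_simps)
  then show ?thesis using k_pos unfolding P_def c_def by (simp add: algebra_simps)
qed

(* A weighted geometric mean of nonnegative integrable functions is integrable, being
   dominated by the corresponding arithmetic mean. *)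
lemma integrable_weighted_geometric_mean:
  fixes M :: "'a measure" and w :: "'b \<Rightarrow> real" and a :: "'b \<Rightarrow> 'a \<Rightarrow> real"
  assumes fin: "finite S" and sw: "sum w S = 1" and w0: "\<And>i. i \<in> S \<Longrightarrow> 0 \<le> w i"
    and a_int: "\<And>i. i \<in> S \<Longrightarrow> integrable M (a i)"
    and a0: "\<And>i x. i \<in> S \<Longrightarrow> x \<in> space M \<Longrightarrow> 0 \<le> a i x"
  shows "integrable M (\<lambda>x. \<Prod>i\<in>S. a i x powr w i)"
proof (rule Bochner_Integration.integrable_bound)
  show "integrable M (\<lambda>x. \<Sum>i\<in>S. w i * a i x)" using a_int by auto
  show "(\<lambda>x. \<Prod>i\<in>S. a i x powr w i) \<in> borel_measurable M"
    using a_int by (intro borel_measurable_prod powr_real_measurable) auto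
  show "AE x in M. norm (\<Prod>i\<in>S. a i x powr w i) \<le> norm (\<Sum>i\<in>S. w i * a i x)"
  proof (rule AE_I2)
    fix x assume x: "x \<in> space M"
    have "(\<Prod>i\<in>S. a i x powr w i) \<le> (\<Sum>i\<in>S. w i * a i x)"
      by (rule weighted_am_gm[OF fin sw]) (use w0 a0 x in auto)
    moreover have "0 \<le> (\<Prod>i\<in>S. a i x powr w i)" by (simp add: prod_nonneg)
    ultimately show "norm (\<Prod>i\<in>S. a i x powr w i) \<le> norm (\<Sum>i\<in>S. w i * a i x)" by simp
  qed
qed

(* The refined AM-GM inequality integrated over a measure space, for densities a_i of total
   mass 1: both arithmetic means then integrate to 1. *)
lemma integrated_refined_am_gm:
  fixes M :: "'a measure" and w :: "'b \<Rightarrow> real" and a :: "'b \<Rightarrow> 'a \<Rightarrow> real" and S :: "'b set"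
  defines "k \<equiv> real (card S)"
  defines "P \<equiv> \<lambda>x. \<Prod>i\<in>S. a i x powr w i"
    and "G \<equiv> \<lambda>x. \<Prod>i\<in>S. a i x powr (1 / k)"
  assumes fin: "finite S" and sw: "sum w S = 1"
    and wmin: "\<And>i. i \<in> S \<Longrightarrow> wmin \<le> w i" and wmin0: "0 \<le> wmin"
    and wmax: "\<And>i. i \<in> S \<Longrightarrow> w i \<le> wmax"
    and a_int: "\<And>i. i \<in> S \<Longrightarrow> integrable M (a i)"
    and a0: "\<And>i x. i \<in> S \<Longrightarrow> x \<in> space M \<Longrightarrow> 0 \<le> a i x"
    and a_integral: "\<And>i. i \<in> S \<Longrightarrow> (\<integral>x. a i x \<partial>M) = 1"
  shows "k * wmin * (1 - integral\<^sup>L M G) \<le> 1 - integral\<^sup>L M P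
       \<and> 1 - integral\<^sup>L M P \<le> k * wmax * (1 - integral\<^sup>L M G)"
proof -
  define A where "A x = (\<Sum>i\<in>S. a i x) / k" for x
  define W where "W x = (\<Sum>i\<in>S. w i * a i x)" for x
  have k_pos: "0 < k" using fin sw by (auto simp: k_def card_gt_0_iff)
  have w0: "\<And>i. i \<in> S \<Longrightarrow> 0 \<le> w i" using wmin wmin0 by (meson order_trans)
  have P_int: "integrable M P"
    unfolding P_def by (rule integrable_weighted_geometric_mean[OF fin sw]) (use w0 a_int a0 in auto)
  have G_int: "integrable M G"
    unfolding G_def using k_pos
    by (intro integrable_weighted_geometric_mean[OF fin]) (use a_int a0 in \<open>auto simp: k_def\<close>)
  have A_int: "integrable M A" unfolding A_def using a_int by simp
  have W_int: "integrable M W" unfolding W_def using a_int by simp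
  have A_integral: "integral\<^sup>L M A = 1"
    unfolding A_def using a_int a_integral k_pos by (simp add: k_def)
  have W_integral: "integral\<^sup>L M W = 1"
    unfolding W_def using a_int a_integral sw by simp
  have "integral\<^sup>L M (\<lambda>x. k * wmin * (A x - G x)) \<le> integral\<^sup>L M (\<lambda>x. W x - P x)"
  proof (rule integral_mono)
    fix x assume x: "x \<in> space M"
    show "k * wmin * (A x - G x) \<le> W x - P x"
      unfolding k_def A_def G_def W_def P_def
      by (rule refined_am_gm_lower[OF fin sw]) (use a0 x wmin wmin0 in auto)
  qed (use A_int G_int W_int P_int in auto)
  moreover have "integral\<^sup>L M (\<lambda>x. W x - P x) \<le> integral\<^sup>L M (\<lambda>x. k * wmax * (A x - G x))"
  proof (rule integral_mono)
    fix x assume x: "x \<in> space M"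
    show "W x - P x \<le> k * wmax * (A x - G x)"
      unfolding k_def A_def G_def W_def P_def
      by (rule refined_am_gm_upper[OF fin sw]) (use a0 x wmax in auto)
  qed (use A_int G_int W_int P_int in auto)
  ultimately show ?thesis
    using A_int G_int W_int P_int A_integral W_integral by simp
qed

lemma abs_powr_real: "\<bar>x\<bar> powr a = x powr a" for x :: real
  by (simp add: powr_def ln_real_def)

lemma Lp_norm_powr:
  assumes "0 < p"
  shows "Lp_norm M p f powr p = (\<integral>x. \<bar>f x\<bar> powr p \<partial>M)"
proof -
  have "0 \<le> (\<integral>x. \<bar>f x\<bar> powr p \<partial>M)" by (simp add: Bochner_Integration.integral_nonneg)
  then show ?thesis using assms by (simp add: Lp_norm_def powr_powr)
qed

lemma Lp_norm_one_nonneg: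
  assumes "\<And>x. x \<in> space M \<Longrightarrow> 0 \<le> g x"
  shows "Lp_norm M 1 g = (\<integral>x. g x \<partial>M)"
proof -
  have "(\<integral>x. \<bar>g x\<bar> \<partial>M) = (\<integral>x. g x \<partial>M)"
    using assms by (intro Bochner_Integration.integral_cong) auto
  moreover have "0 \<le> (\<integral>x. g x \<partial>M)" using assms by (simp add: Bochner_Integration.integral_nonneg)
  ultimately show ?thesis by (simp add: Lp_norm_def)
qed

lemma normalized_Lp_power:
  fixes M :: "'a measure" and p :: real and f :: "'a \<Rightarrow> real"
  defines "N \<equiv> Lp_norm M p f"
  assumes f_Lp: "in_Lp M p f" and p_pos: "0 < p" and N_pos: "0 < N"
  shows "integrable M (\<lambda>x. (f x / N) powr p)" and "(\<integral>x. (f x / N) powr p \<partial>M) = 1"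
proof -
  have eq: "(f x / N) powr p = \<bar>f x\<bar> powr p / N powr p" for x
    by (simp add: powr_divide abs_powr_real)
  show "integrable M (\<lambda>x. (f x / N) powr p)"
    using f_Lp by (simp add: eq in_Lp_def)
  have "N powr p = (\<integral>x. \<bar>f x\<bar> powr p \<partial>M)"
    unfolding N_def using p_pos by (rule Lp_norm_powr)
  moreover have "0 < N powr p" using N_pos by simp
  ultimately show "(\<integral>x. (f x / N) powr p \<partial>M) = 1" by (simp add: eq)
qed

lemma integral_normalized_root_product:
  fixes M :: "'a measure" and f :: "'b \<Rightarrow> 'a \<Rightarrow> real" and N p :: "'b \<Rightarrow> real"
  assumes f_nonneg: "\<And>i x. i \<in> I \<Longrightarrow> x \<in> space M \<Longrightarrow> 0 \<le> f i x"
    and N_nonneg: "\<And>i. i \<in> I \<Longrightarrow> 0 \<le> N i" and p_pos: "\<And>i. i \<in> I \<Longrightarrow> 0 < p i"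
  shows "(\<integral>x. (\<Prod>i\<in>I. ((f i x / N i) powr p i) powr (1 / p i)) \<partial>M)
           = Lp_norm M 1 (\<lambda>x. \<Prod>i\<in>I. f i x) / (\<Prod>i\<in>I. N i)"
proof -
  have root: "((f i x / N i) powr p i) powr (1 / p i) = f i x / N i"
    if "i \<in> I" "x \<in> space M" for i x
    using f_nonneg[OF that] N_nonneg[OF that(1)] p_pos[OF that(1)] by (simp add: powr_powr)
  have "(\<integral>x. (\<Prod>i\<in>I. ((f i x / N i) powr p i) powr (1 / p i)) \<partial>M)
          = (\<integral>x. (\<Prod>i\<in>I. f i x) / (\<Prod>i\<in>I. N i) \<partial>M)"
    using root by (intro Bochner_Integration.integral_cong) (simp_all add: prod_dividef)
  also have "\<dots> = Lp_norm M 1 (\<lambda>x. \<Prod>i\<in>I. f i x) / (\<Prod>i\<in>I. N i)"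
    using f_nonneg by (subst Lp_norm_one_nonneg) (auto intro!: prod_nonneg)
  finally show ?thesis .
qed

lemma normalized_power_product:
  fixes f N p :: "'b \<Rightarrow> real"
  shows "(\<Prod>i\<in>I. ((f i / N i) powr p i) powr c)
           = (\<Prod>i\<in>I. f i powr (p i * c)) / (\<Prod>i\<in>I. N i powr (p i * c))"
  by (simp add: powr_powr powr_divide prod_dividef)

lemma bounds_from_relative_deficit:
  fixes c L lo hi :: real
  assumes "0 < c" and "lo \<le> 1 - L / c" and "1 - L / c \<le> hi"
  shows "c * (1 - hi) \<le> L \<and> L \<le> c * (1 - lo)"
  using assms by (simp add: field_simps)

theorem theorem3p3:
  fixes M :: "'a measure" and n :: nat and p :: "nat \<Rightarrow> real" and f :: "nat \<Rightarrow> 'a \<Rightarrow> real"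
  assumes nonzero: "emeasure M (space M) \<noteq> 0"
    and p_gt: "\<And>i. i \<in> {1..n} \<Longrightarrow> 1 < p i"
    and p_sum: "(\<Sum>i=1..n. 1 / p i) = 1"
    and f_Lp: "\<And>i. i \<in> {1..n} \<Longrightarrow> in_Lp M (p i) (f i)"
    and f_nonneg: "\<And>i x. i \<in> {1..n} \<Longrightarrow> x \<in> space M \<Longrightarrow> 0 \<le> f i x"
    and f_norm_pos: "\<And>i. i \<in> {1..n} \<Longrightarrow> Lp_norm M (p i) (f i) > 0"
  defines "pmin_inv \<equiv> Min ((\<lambda>i. 1 / p i) ` {1..n})"
    and "pmax_inv \<equiv> Max ((\<lambda>i. 1 / p i) ` {1..n})"
    and "R \<equiv> (\<integral>x. (\<Prod>i=1..n. f i x powr (p i / real n)) \<partial>M)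
              / (\<Prod>i=1..n. Lp_norm M (p i) (f i) powr (p i / real n))"
  shows "(\<Prod>i=1..n. Lp_norm M (p i) (f i)) * (1 - real n * pmax_inv * (1 - R))
           \<le> Lp_norm M 1 (\<lambda>x. \<Prod>i=1..n. f i x)
         \<and> Lp_norm M 1 (\<lambda>x. \<Prod>i=1..n. f i x)
           \<le> (\<Prod>i=1..n. Lp_norm M (p i) (f i)) * (1 - real n * pmin_inv * (1 - R))"
proof -
  define N where "N i = Lp_norm M (p i) (f i)" for i
  define a where "a i x = (f i x / N i) powr p i" for i x
  have p_pos: "\<And>i. i \<in> {1..n} \<Longrightarrow> 0 < p i" using p_gt by (meson less_trans zero_less_one)
  have N_pos: "\<And>i. i \<in> {1..n} \<Longrightarrow> 0 < N i" using f_norm_pos by (simp add: N_def)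
  have "n \<noteq> 0" using p_sum by (cases n) auto
  have a_int: "integrable M (a i)" and a_integral: "(\<integral>x. a i x \<partial>M) = 1" if "i \<in> {1..n}" for i
    using normalized_Lp_power[OF f_Lp[OF that] p_pos[OF that]] N_pos[OF that]
    unfolding a_def N_def by auto
  have a_nonneg: "\<And>i x. 0 \<le> a i x" by (simp add: a_def)
  have pmin: "\<And>i. i \<in> {1..n} \<Longrightarrow> pmin_inv \<le> 1 / p i" by (simp add: pmin_inv_def)
  have pmax: "\<And>i. i \<in> {1..n} \<Longrightarrow> 1 / p i \<le> pmax_inv" by (simp add: pmax_inv_def)
  have pmin_nonneg: "0 \<le> pmin_inv" unfolding pmin_inv_def using \<open>n \<noteq> 0\<close> p_pos
    by (subst Min_ge_iff) (auto simp: less_imp_le)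
  define WM where "WM = (\<integral>x. (\<Prod>i=1..n. a i x powr (1 / p i)) \<partial>M)"
  define GM where "GM = (\<integral>x. (\<Prod>i=1..n. a i x powr (1 / real n)) \<partial>M)"
  from integrated_refined_am_gm[OF _ p_sum pmin pmin_nonneg pmax a_int a_nonneg a_integral]
  have deficits: "real n * pmin_inv * (1 - GM) \<le> 1 - WM \<and> 1 - WM \<le> real n * pmax_inv * (1 - GM)"
    by (simp add: WM_def GM_def)
  have WM_eq: "WM = Lp_norm M 1 (\<lambda>x. \<Prod>i=1..n. f i x) / (\<Prod>i=1..n. N i)"
    unfolding WM_def a_def
    by (rule integral_normalized_root_product) (use f_nonneg N_pos p_pos in \<open>auto simp: less_imp_le\<close>)
  have GM_eq: "GM = R"
    by (simp add: GM_def a_def normalized_power_product R_def N_def)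
  have "0 < (\<Prod>i=1..n. N i)" by (rule prod_pos) (use N_pos in auto)
  then have "(\<Prod>i=1..n. N i) * (1 - real n * pmax_inv * (1 - R)) \<le> Lp_norm M 1 (\<lambda>x. \<Prod>i=1..n. f i x)
      \<and> Lp_norm M 1 (\<lambda>x. \<Prod>i=1..n. f i x) \<le> (\<Prod>i=1..n. N i) * (1 - real n * pmin_inv * (1 - R))"
    using bounds_from_relative_deficit deficits unfolding WM_eq GM_eq by blast
  then show ?thesis by (simp add: N_def)
qed

end
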